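(* (Height-preserving weakening.) For all finite multisets of formulas $\Gamma,\Delta$, every formula $\nu$ and every $n\geq 1$: if $\vdash^n\Gamma\Rightarrow\Delta$ then $\vdash^n\Gamma,\nu\Rightarrow\Delta$ (left weakening), and if $\vdash^n\Gamma\Rightarrow\Delta$ then $\vdash^n\Gamma\Rightarrow\nu,\Delta$ (right weakening).
   Context: Fix a countably infinite set $\mathsf{Prop}$ of propositional variables. Classical formulas are generated by $\alpha ::= p \mid \bot \mid \neg\alpha \mid \alpha\wedge\alpha \mid \alpha\vee\alpha$ with $p\in\mathsf{Prop}$. Formulas are generated by $\phi ::= \alpha \mid \phi\wedge\phi \mid \phi\vee\phi \mid \phi\mathbin{\backslash\!\!/}\phi$ where $\alpha$ is classical ($\vee$: split disjunction, $\mathbin{\backslash\!\!/}$: inquisitive disjunction). A sequent is $\Gamma\Rightarrow\Delta$ with $\Gamma,\Delta$ finite multisets of formulas; "$\Gamma,\Delta$" denotes multiset union. Deep-inference notation: for a formula $\chi$ with a designated occurrence of a subformula not in the scope of any negation, $\chi\{\eta\}$ denotes the result of replacing that occurrence by $\eta$. The cut-free calculus $\mathsf{GT}^-$ ($\alpha$ ranges over classical formulas, $\Lambda$ over multisets of classical formulas): axioms $\Gamma,p\Rightarrow p,\Delta$ and $\Gamma,\bot\Rightarrow\Delta$; (L$\neg$) from $\Gamma\Rightarrow\alpha,\Delta$ infer $\Gamma,\neg\alpha\Rightarrow\Delta$; (R$\neg$) from $\Gamma,\alpha\Rightarrow\Delta$ infer $\Gamma\Rightarrow\neg\alpha,\Delta$;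 (L$\wedge$) from $\Gamma,\phi,\psi\Rightarrow\Delta$ infer $\Gamma,\phi\wedge\psi\Rightarrow\Delta$; (R$\wedge$) from $\Gamma\Rightarrow\phi,\Lambda$ and $\Gamma\Rightarrow\psi,\Lambda$ infer $\Gamma\Rightarrow\phi\wedge\psi,\Lambda,\Delta$; (L$\vee$) from $\Gamma,\phi\Rightarrow\Lambda$ and $\Gamma,\psi\Rightarrow\Lambda$ infer $\Gamma,\phi\vee\psi\Rightarrow\Lambda,\Delta$; (R$\vee$) from $\Gamma\Rightarrow\phi,\psi,\Delta$ infer $\Gamma\Rightarrow\phi\vee\psi,\Delta$; (L$\mathbin{\backslash\!\!/}$) from $\Gamma,\chi\{\phi_L\}\Rightarrow\Delta$ and $\Gamma,\chi\{\phi_R\}\Rightarrow\Delta$ infer $\Gamma,\chi\{\phi_L\mathbin{\backslash\!\!/}\phi_R\}\Rightarrow\Delta$; (R$\mathbin{\backslash\!\!/}$) from $\Gamma\Rightarrow\chi\{\phi_i\},\Delta$ ($i\in\{L,R\}$) infer $\Gamma\Rightarrow\chi\{\phi_L\mathbin{\backslash\!\!/}\phi_R\},\Delta$. The height of a derivation consisting of a single axiom is $1$; otherwise it is $1$ plus the maximum height of the subderivations of the premises of its last rule. $\vdash^n\Gamma\Rightarrow\Delta$ means there is a $\mathsf{GT}^-$-derivation of $\Gamma\Rightarrow\Delta$ of height at most $n$. *)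

theory Defs
  imports Main "HOL-Library.Multiset"
begin

datatype form =
    Atom nat
  | Bot
  | Neg form
  | Conj form form
  | Disj form form      (* split disjunction *)
  | IDisj form form

fun classical :: "form \<Rightarrow> bool" where
  "classical (Atom p) = True"
| "classical Bot = True"
| "classical (Neg a) = classical a"
| "classical (Conj a b) = (classical a \<and> classical b)"
| "classical (Disj a b) = (classical a \<and> classical b)"
| "classical (IDisj a b) = False"

fun wf_form :: "form \<Rightarrow> bool" where
  "wf_form (Atom p) = True"
| "wf_form Bot = True"
| "wf_form (Neg a) = classical a"
| "wf_form (Conj a b) = (wf_form a \<and> wf_form b)"
| "wf_form (Disj a b) = (wf_form a \<and> wf_form b)"
| "wf_form (IDisj a b) = (wf_form a \<and> wf_form b)"

datatype ctx =
    Hole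
  | CConjL ctx form | CConjR form ctx
  | CDisjL ctx form | CDisjR form ctx
  | CIDisjL ctx form | CIDisjR form ctx

fun fill :: "ctx \<Rightarrow> form \<Rightarrow> form" where
  "fill Hole e = e"
| "fill (CConjL c b) e = Conj (fill c e) b"
| "fill (CConjR a c) e = Conj a (fill c e)"
| "fill (CDisjL c b) e = Disj (fill c e) b"
| "fill (CDisjR a c) e = Disj a (fill c e)"
| "fill (CIDisjL c b) e = IDisj (fill c e) b"
| "fill (CIDisjR a c) e = IDisj a (fill c e)"

(* gt h \<Gamma> \<Delta>: there is a GT^- derivation of \<Gamma> \<Rightarrow> \<Delta> of height exactly h *)
inductive gt :: "nat \<Rightarrow> form multiset \<Rightarrow> form multiset \<Rightarrow> bool" where
  ax_atom: "gt 1 (add_mset (Atom p) \<Gamma>) (add_mset (Atom p) \<Delta>)"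
| ax_bot: "gt 1 (add_mset Bot \<Gamma>) \<Delta>"
| L_neg: "classical a \<Longrightarrow> gt h \<Gamma> (add_mset a \<Delta>) \<Longrightarrow> gt (Suc h) (add_mset (Neg a) \<Gamma>) \<Delta>"
| R_neg: "classical a \<Longrightarrow> gt h (add_mset a \<Gamma>) \<Delta> \<Longrightarrow> gt (Suc h) \<Gamma> (add_mset (Neg a) \<Delta>)"
| L_conj: "gt h (add_mset \<phi> (add_mset \<psi> \<Gamma>)) \<Delta> \<Longrightarrow> gt (Suc h) (add_mset (Conj \<phi> \<psi>) \<Gamma>) \<Delta>"
| R_conj: "\<forall>a\<in>#\<Lambda>. classical a \<Longrightarrow> gt h1 \<Gamma> (add_mset \<phi> \<Lambda>) \<Longrightarrow> gt h2 \<Gamma> (add_mset \<psi> \<Lambda>) \<Longrightarrow>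
           gt (Suc (max h1 h2)) \<Gamma> (add_mset (Conj \<phi> \<psi>) (\<Lambda> + \<Delta>))"
| L_disj: "\<forall>a\<in>#\<Lambda>. classical a \<Longrightarrow> gt h1 (add_mset \<phi> \<Gamma>) \<Lambda> \<Longrightarrow> gt h2 (add_mset \<psi> \<Gamma>) \<Lambda> \<Longrightarrow>
           gt (Suc (max h1 h2)) (add_mset (Disj \<phi> \<psi>) \<Gamma>) (\<Lambda> + \<Delta>)"
| R_disj: "gt h \<Gamma> (add_mset \<phi> (add_mset \<psi> \<Delta>)) \<Longrightarrow> gt (Suc h) \<Gamma> (add_mset (Disj \<phi> \<psi>) \<Delta>)"
| L_idisj: "gt h1 (add_mset (fill \<chi> \<phi>L) \<Gamma>) \<Delta> \<Longrightarrow> gt h2 (add_mset (fill \<chi> \<phi>R) \<Gamma>) \<Delta> \<Longrightarrow>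
           gt (Suc (max h1 h2)) (add_mset (fill \<chi> (IDisj \<phi>L \<phi>R)) \<Gamma>) \<Delta>"
| R_idisjL: "gt h \<Gamma> (add_mset (fill \<chi> \<phi>L) \<Delta>) \<Longrightarrow> gt (Suc h) \<Gamma> (add_mset (fill \<chi> (IDisj \<phi>L \<phi>R)) \<Delta>)"
| R_idisjR: "gt h \<Gamma> (add_mset (fill \<chi> \<phi>R) \<Delta>) \<Longrightarrow> gt (Suc h) \<Gamma> (add_mset (fill \<chi> (IDisj \<phi>L \<phi>R)) \<Delta>)"

definition derivable_le :: "nat \<Rightarrow> form multiset \<Rightarrow> form multiset \<Rightarrow> bool" where
  "derivable_le n \<Gamma> \<Delta> \<longleftrightarrow> (\<exists>h. h \<le> n \<and> gt h \<Gamma> \<Delta>)"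

end

theory Submission
  imports Defs
begin

text \<open>Only the context-sharing rules R\<and> and L\<or> need care: their premises must keep the
  classical side multiset \<Lambda>, so the induction hypothesis is used with nothing added on the
  right and the new succedents are absorbed into the rule's own weakening part \<Delta>.\<close>

lemma gt_weaken: "gt h \<Gamma> \<Delta> \<Longrightarrow> gt h (\<Gamma> + \<Gamma>') (\<Delta> + \<Delta>')"
proof (induction arbitrary: \<Gamma>' \<Delta>' rule: gt.induct)
  case (ax_atom p \<Gamma> \<Delta>)
  show ?case using gt.ax_atom[of p "\<Gamma> + \<Gamma>'" "\<Delta> + \<Delta>'"] by simp
next
  case (ax_bot \<Gamma> \<Delta>)
  show ?case using gt.ax_bot[of "\<Gamma> + \<Gamma>'" "\<Delta> + \<Delta>'"] by simp
next
  case (R_conj \<Lambda> h1 \<Gamma> \<phi> h2 \<psi> \<Delta>)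
  have "gt h1 (\<Gamma> + \<Gamma>') (add_mset \<phi> \<Lambda>)" "gt h2 (\<Gamma> + \<Gamma>') (add_mset \<psi> \<Lambda>)"
    using R_conj.IH[where \<Delta>' = "{#}"] by simp_all
  from gt.R_conj[OF R_conj.hyps(1) this, of "\<Delta> + \<Delta>'"] show ?case
    by (simp add: add.assoc)
next
  case (L_disj \<Lambda> h1 \<phi> \<Gamma> h2 \<psi> \<Delta>)
  have "gt h1 (add_mset \<phi> (\<Gamma> + \<Gamma>')) \<Lambda>" "gt h2 (add_mset \<psi> (\<Gamma> + \<Gamma>')) \<Lambda>"
    using L_disj.IH[where \<Delta>' = "{#}"] by simp_all
  from gt.L_disj[OF L_disj.hyps(1) this, of "\<Delta> + \<Delta>'"] show ?case
    by (simp add: add.assoc)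
qed (auto intro: gt.intros)

lemma derivable_le_weaken:
  "derivable_le n \<Gamma> \<Delta> \<Longrightarrow> derivable_le n (\<Gamma> + \<Gamma>') (\<Delta> + \<Delta>')"
  unfolding derivable_le_def using gt_weaken by blast

lemma derivable_le_weaken_left:
  "derivable_le n \<Gamma> \<Delta> \<Longrightarrow> derivable_le n (add_mset \<nu> \<Gamma>) \<Delta>"
  using derivable_le_weaken[of n \<Gamma> \<Delta> "{#\<nu>#}" "{#}"] by simp

lemma derivable_le_weaken_right:
  "derivable_le n \<Gamma> \<Delta> \<Longrightarrow> derivable_le n \<Gamma> (add_mset \<nu> \<Delta>)"
  using derivable_le_weaken[of n \<Gamma> \<Delta> "{#}" "{#\<nu>#}"] by simp

theorem lemma4p1:
  fixes \<Gamma> \<Delta> :: "form multiset" and \<nu> :: form and n :: nat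
  assumes "\<forall>f\<in>#\<Gamma>. wf_form f" and "\<forall>f\<in>#\<Delta>. wf_form f" and "wf_form \<nu>" and "n \<ge> 1"
  shows "(derivable_le n \<Gamma> \<Delta> \<longrightarrow> derivable_le n (add_mset \<nu> \<Gamma>) \<Delta>)
       \<and> (derivable_le n \<Gamma> \<Delta> \<longrightarrow> derivable_le n \<Gamma> (add_mset \<nu> \<Delta>))"
  using derivable_le_weaken_left derivable_le_weaken_right by blast

end
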